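(* Let $m\neq n$ be positive integers and let $g,h\in\mathrm{Homeo}_+(S^1)$ satisfy $gh^mg^{-1}=h^n$. Then $h$ has a periodic point whose period divides $|n-m|$.
   Context: $\mathrm{Homeo}_+(S^1)$ is the group of orientation-preserving homeomorphisms of $S^1$. *)

theory Defs
  imports "HOL-Analysis.Analysis"
begin

definition circle :: "complex set" where
  "circle = sphere 0 1"

text \<open>Orientation-preserving homeomorphisms of S^1: homeomorphisms of the circle
  admitting a lift to an increasing homeomorphism F of R commuting with
  translation by 1, with respect to the covering map x \<mapsto> exp(2 pi i x).\<close>
definition homeo_plus_S1 :: "(complex \<Rightarrow> complex) \<Rightarrow> bool" where
  "homeo_plus_S1 h \<longleftrightarrow>
     (\<exists>h'. homeomorphism circle circle h h') \<and>
     (\<exists>F :: real \<Rightarrow> real. continuous_on UNIV F \<and> strict_mono F \<and>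
        (\<forall>x. F (x + 1) = F x + 1) \<and>
        (\<forall>x. h (cis (2 * pi * x)) = cis (2 * pi * F x)))"

definition periodic_point_of_period ::
  "('a \<Rightarrow> 'a) \<Rightarrow> 'a \<Rightarrow> nat \<Rightarrow> bool" where
  "periodic_point_of_period h x p \<longleftrightarrow>
     p > 0 \<and> (h ^^ p) x = x \<and> (\<forall>j. 0 < j \<and> j < p \<longrightarrow> (h ^^ j) x \<noteq> x)"

end

(*
  Lift h and g to degree-one lifts F and G on the real line. The relation g h^m g^-1 = h^n
  lifts to G (F^m x) = F^n (G x) + k for a fixed integer k, because the difference of the two
  sides is a continuous integer-valued function. Iterating gives G o F^(mt) = F^(nt) o G + tk,
  and since the displacement F x - x of a lift varies by at most 1, F^(nt) 0 - F^(mt) 0 stays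
  within 2 of -tk: the power F^|n-m| drifts by an integer kappa = +-k per step. If F^|n-m| x - x
  never equalled kappa, continuity and periodicity would keep it uniformly on one side of kappa,
  contradicting the bounded drift. So F^|n-m| x = x + kappa for some x, and h^|n-m| fixes the
  point over x; its least period divides |n-m|.
*)

theory Submission
  imports Defs
begin

definition degree_one_lift :: "(real \<Rightarrow> real) \<Rightarrow> bool" where
  "degree_one_lift F \<longleftrightarrow> continuous_on UNIV F \<and> mono F \<and> (\<forall>x. F (x + 1) = F x + 1)"

lemma shift_plus_of_int:
  fixes F :: "real \<Rightarrow> real"
  assumes "\<And>x. F (x + 1) = F x + c"
  shows "F (x + of_int k) = F x + of_int k * c"
proof (induction k rule: int_induct[where k = 0])
  case base
  then show ?case by simp
next
  case (step1 i)
  have "F (x + of_int (i + 1)) = F ((x + of_int i) + 1)"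
    by (simp add: algebra_simps)
  also have "\<dots> = F (x + of_int i) + c"
    by (rule assms)
  also have "\<dots> = F x + of_int (i + 1) * c"
    using step1 by (simp add: algebra_simps)
  finally show ?case .
next
  case (step2 i)
  have "F (x + of_int i) = F ((x + of_int (i - 1)) + 1)"
    by (simp add: algebra_simps)
  also have "\<dots> = F (x + of_int (i - 1)) + c"
    by (rule assms)
  finally have "F (x + of_int (i - 1)) = F (x + of_int i) - c"
    by simp
  with step2 show ?case by (simp add: algebra_simps)
qed

lemma degree_one_lift_plus_of_int:
  assumes "degree_one_lift F"
  shows "F (x + of_int k) = F x + of_int k"
  using shift_plus_of_int[of F 1] assms by (simp add: degree_one_lift_def)

lemma degree_one_lift_funpow:
  assumes "degree_one_lift F"
  shows "degree_one_lift (F ^^ n)"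
proof -
  have cont: "continuous_on UNIV F" and "mono F" and shift: "\<And>x. F (x + 1) = F x + 1"
    using assms by (auto simp: degree_one_lift_def)
  have "continuous_on UNIV (F ^^ n)"
  proof (induction n)
    case (Suc n)
    have "continuous_on UNIV (F \<circ> F ^^ n)"
      by (rule continuous_on_compose[OF Suc continuous_on_subset[OF cont subset_UNIV]])
    then show ?case by simp
  qed simp
  moreover have "(F ^^ n) (x + 1) = (F ^^ n) x + 1" for x
    by (induction n) (simp_all add: shift)
  ultimately show ?thesis
    using mono_pow[OF \<open>mono F\<close>] by (simp add: degree_one_lift_def)
qed

lemma degree_one_lift_displacement:
  assumes "degree_one_lift F"
  shows "\<bar>(F x - x) - (F y - y)\<bar> \<le> 1"
proof -
  have "F u - u \<le> F v - v + 1" for u v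
  proof -
    define k where "k = \<lfloor>u - v\<rfloor>"
    define u' where "u' = u - of_int k"
    have "v \<le> u'" "u' \<le> v + 1"
      unfolding u'_def k_def by linarith+
    have "F u = F u' + of_int k"
      using degree_one_lift_plus_of_int[OF assms, of u' k] by (simp add: u'_def)
    moreover have "F u' \<le> F v + 1"
      using assms \<open>u' \<le> v + 1\<close> by (metis degree_one_lift_def monoD)
    ultimately show ?thesis
      using \<open>v \<le> u'\<close> unfolding u'_def by linarith
  qed
  from this[of x y] this[of y x] show ?thesis
    unfolding abs_le_iff by linarith
qed

lemma periodic_continuous_attains_bounds:
  fixes \<phi> :: "real \<Rightarrow> real"
  assumes cont: "continuous_on UNIV \<phi>" and per: "\<And>x. \<phi> (x + 1) = \<phi> x"
  obtains x0 x1 where "\<And>y. \<phi> x0 \<le> \<phi> y" "\<And>y. \<phi> y \<le> \<phi> x1"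
proof -
  have reduce: "\<phi> y = \<phi> (y - of_int \<lfloor>y\<rfloor>)" for y
    using shift_plus_of_int[of \<phi> 0 "y - of_int \<lfloor>y\<rfloor>" "\<lfloor>y\<rfloor>"] per by simp
  have unit: "y - of_int \<lfloor>y\<rfloor> \<in> {0..1}" for y
    using floor_correct[of y] by auto
  obtain x0 where x0: "\<forall>y\<in>{0..1}. \<phi> x0 \<le> \<phi> y"
    using continuous_attains_inf[OF compact_Icc, of 0 1 \<phi>] continuous_on_subset[OF cont]
    by auto
  obtain x1 where x1: "\<forall>y\<in>{0..1}. \<phi> y \<le> \<phi> x1"
    using continuous_attains_sup[OF compact_Icc, of 0 1 \<phi>] continuous_on_subset[OF cont]
    by auto
  show ?thesis
  proof (rule that)
    show "\<phi> x0 \<le> \<phi> y" and "\<phi> y \<le> \<phi> x1" for y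
      using x0 x1 unit[of y] reduce[of y] by auto
  qed
qed

lemma funpow_displacement_ge:
  fixes F :: "real \<Rightarrow> real"
  assumes "\<And>x. a \<le> F x - x"
  shows "real t * a \<le> (F ^^ t) y - y"
proof (induction t)
  case (Suc t)
  with assms[of "(F ^^ t) y"] show ?case by (simp add: algebra_simps)
qed simp

lemma funpow_displacement_le:
  fixes F :: "real \<Rightarrow> real"
  assumes "\<And>x. F x - x \<le> b"
  shows "(F ^^ t) y - y \<le> real t * b"
proof (induction t)
  case (Suc t)
  with assms[of "(F ^^ t) y"] show ?case by (simp add: algebra_simps)
qed simp

lemma nonpos_if_multiples_bounded:
  fixes c C :: real
  assumes "\<And>t::nat. real t * c \<le> C"
  shows "c \<le> 0"
proof (rule ccontr)
  assume "\<not> c \<le> 0"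
  then obtain t where "C < real t * c"
    using reals_Archimedean3[of c] by auto
  with assms[of t] show False by simp
qed

lemma degree_one_lift_attains_rotation:
  assumes F: "degree_one_lift F"
    and drift: "\<And>t::nat. \<exists>y. \<bar>(F ^^ t) y - y - real t * \<kappa>\<bar> \<le> C"
  shows "\<exists>x. F x = x + \<kappa>"
proof (rule ccontr)
  assume no_point: "\<nexists>x. F x = x + \<kappa>"
  define \<phi> where "\<phi> x = F x - x - \<kappa>" for x
  have cont: "continuous_on UNIV \<phi>"
    using F unfolding \<phi>_def degree_one_lift_def by (intro continuous_intros) auto
  have per: "\<phi> (x + 1) = \<phi> x" for x
    using F unfolding \<phi>_def degree_one_lift_def by simp
  have no_zero: "\<phi> x \<noteq> 0" for x
    using no_point unfolding \<phi>_def by (auto simp: algebra_simps)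
  have sign: "(\<forall>x. 0 < \<phi> x) \<or> (\<forall>x. \<phi> x < 0)"
  proof (rule ccontr)
    assume "\<not> ?thesis"
    then obtain u v where "\<phi> u \<le> 0" "0 \<le> \<phi> v"
      by (auto simp: not_less)
    then have "0 \<in> range \<phi>"
      using connectedD_interval[OF connected_continuous_image[OF cont connected_UNIV]] by blast
    with no_zero show False
      by auto
  qed
  obtain x0 x1 where min: "\<And>y. \<phi> x0 \<le> \<phi> y" and max: "\<And>y. \<phi> y \<le> \<phi> x1"
    using periodic_continuous_attains_bounds[OF cont per] by blast
  have lower: "real t * \<phi> x0 \<le> C" and upper: "real t * - \<phi> x1 \<le> C" for t
  proof -
    obtain y where y: "\<bar>(F ^^ t) y - y - real t * \<kappa>\<bar> \<le> C"
      using drift by blast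
    have "real t * (\<kappa> + \<phi> x0) \<le> (F ^^ t) y - y"
      by (rule funpow_displacement_ge) (use min in \<open>simp add: \<phi>_def\<close>)
    with y show "real t * \<phi> x0 \<le> C"
      by (simp add: algebra_simps abs_le_iff)
    have "(F ^^ t) y - y \<le> real t * (\<kappa> + \<phi> x1)"
      by (rule funpow_displacement_le) (use max in \<open>simp add: \<phi>_def\<close>)
    with y show "real t * - \<phi> x1 \<le> C"
      by (simp add: algebra_simps abs_le_iff)
  qed
  have "\<phi> x0 \<le> 0"
    using lower by (rule nonpos_if_multiples_bounded)
  moreover have "- \<phi> x1 \<le> 0"
    using upper by (rule nonpos_if_multiples_bounded)
  ultimately show False
    using sign by (meson neg_le_0_iff_le not_le)
qed

lemma funpow_difference_attains_rotation:
  assumes F: "degree_one_lift F" and "a < b"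
    and drift: "\<And>t::nat. \<bar>(F ^^ (b * t)) 0 - (F ^^ (a * t)) 0 - real t * \<kappa>\<bar> \<le> C"
  shows "\<exists>x. (F ^^ (b - a)) x = x + \<kappa>"
proof (rule degree_one_lift_attains_rotation[OF degree_one_lift_funpow[OF F]])
  fix t
  have "((F ^^ (b - a)) ^^ t) ((F ^^ (a * t)) 0) = (F ^^ ((b - a) * t + a * t)) 0"
    by (simp only: funpow_mult funpow_add comp_apply)
  also have "\<dots> = (F ^^ (b * t)) 0"
    using \<open>a < b\<close> by (simp add: diff_mult_distrib)
  finally have "((F ^^ (b - a)) ^^ t) ((F ^^ (a * t)) 0) = (F ^^ (b * t)) 0" .
  then show "\<exists>y. \<bar>((F ^^ (b - a)) ^^ t) y - y - real t * \<kappa>\<bar> \<le> C"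
    using drift[of t] by (intro exI[of _ "(F ^^ (a * t)) 0"]) simp
qed

lemma twisted_semiconjugacy_funpow:
  assumes F: "degree_one_lift F"
    and rel: "\<And>x. G ((F ^^ m) x) = (F ^^ n) (G x) + of_int k"
  shows "G ((F ^^ (m * t)) x) = (F ^^ (n * t)) (G x) + real t * of_int k"
proof (induction t)
  case (Suc t)
  have "G ((F ^^ (m * Suc t)) x) = (F ^^ n) (G ((F ^^ (m * t)) x)) + of_int k"
    using rel by (simp add: funpow_add)
  also have "\<dots> = (F ^^ n) ((F ^^ (n * t)) (G x) + of_int (int t * k)) + of_int k"
    using Suc by simp
  also have "\<dots> = (F ^^ n) ((F ^^ (n * t)) (G x)) + of_int (int t * k) + of_int k"
    using degree_one_lift_plus_of_int[OF degree_one_lift_funpow[OF F],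
        of n "(F ^^ (n * t)) (G x)" "int t * k"]
    by simp
  also have "\<dots> = (F ^^ (n * Suc t)) (G x) + real (Suc t) * of_int k"
    by (simp add: funpow_add algebra_simps)
  finally show ?case .
qed simp

lemma twisted_semiconjugacy_drift:
  assumes F: "degree_one_lift F" and G: "degree_one_lift G"
    and rel: "\<And>x. G ((F ^^ m) x) = (F ^^ n) (G x) + of_int k"
  shows "\<bar>(F ^^ (n * t)) 0 - (F ^^ (m * t)) 0 + real t * of_int k\<bar> \<le> 2"
proof -
  let ?A = "(F ^^ (m * t)) 0" and ?B = "(F ^^ (n * t)) 0"
  have "G ?A = (F ^^ (n * t)) (G 0) + real t * of_int k"
    by (rule twisted_semiconjugacy_funpow[where G = G, OF F rel])
  moreover have "\<bar>(G ?A - ?A) - (G 0 - 0)\<bar> \<le> 1"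
    by (rule degree_one_lift_displacement[OF G])
  moreover have "\<bar>((F ^^ (n * t)) (G 0) - G 0) - (?B - 0)\<bar> \<le> 1"
    by (rule degree_one_lift_displacement[OF degree_one_lift_funpow[OF F]])
  ultimately show ?thesis
    by (simp add: abs_le_iff)
qed

lemma twisted_semiconjugacy_integer_displacement:
  assumes F: "degree_one_lift F" and G: "degree_one_lift G" and "m \<noteq> n"
    and rel: "\<And>x. G ((F ^^ m) x) = (F ^^ n) (G x) + of_int k"
  shows "\<exists>x. \<exists>\<kappa>\<in>\<int>. (F ^^ nat \<bar>int n - int m\<bar>) x = x + \<kappa>"
proof (cases "m < n")
  case True
  have "\<exists>x. (F ^^ (n - m)) x = x + of_int (- k)"
    using twisted_semiconjugacy_drift[OF F G rel]
    by (intro funpow_difference_attains_rotation[OF F True]) simp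
  moreover have "nat \<bar>int n - int m\<bar> = n - m"
    using True by simp
  ultimately show ?thesis
    by (metis Ints_of_int)
next
  case False
  with \<open>m \<noteq> n\<close> have "n < m" by simp
  have "\<bar>(F ^^ (m * t)) 0 - (F ^^ (n * t)) 0 - real t * of_int k\<bar> \<le> 2" for t
    using twisted_semiconjugacy_drift[OF F G rel, of t] by (auto simp: abs_le_iff)
  then have "\<exists>x. (F ^^ (m - n)) x = x + of_int k"
    by (rule funpow_difference_attains_rotation[OF F \<open>n < m\<close>])
  moreover have "nat \<bar>int n - int m\<bar> = m - n"
    using \<open>n < m\<close> by simp
  ultimately show ?thesis
    by (metis Ints_of_int)
qed

lemma cis_2pi_eq_iff: "cis (2 * pi * x) = cis (2 * pi * y) \<longleftrightarrow> x - y \<in> \<int>"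
proof
  assume "cis (2 * pi * x) = cis (2 * pi * y)"
  then have "cis (2 * pi * (x - y)) = 1"
    by (simp add: right_diff_distrib flip: cis_divide)
  from arg_cong[where f = Re, OF this] have "cos (2 * pi * (x - y)) = 1"
    by simp
  then obtain k :: int where "2 * pi * (x - y) = of_int k * 2 * pi"
    using cos_one_2pi_int by blast
  then have "x - y = of_int k"
    by simp
  then show "x - y \<in> \<int>"
    by simp
next
  assume "x - y \<in> \<int>"
  have "cis (2 * pi * x) = cis (2 * pi * y) * cis (2 * pi * (x - y))"
    by (simp add: cis_mult algebra_simps)
  with \<open>x - y \<in> \<int>\<close> show "cis (2 * pi * x) = cis (2 * pi * y)"
    by simp
qed

lemma homeo_plus_S1_degree_one_lift:
  assumes "homeo_plus_S1 f"
  obtains F where "degree_one_lift F" and "\<And>x. f (cis (2 * pi * x)) = cis (2 * pi * F x)"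
proof -
  from assms obtain F where "continuous_on UNIV F" "strict_mono F" "\<forall>x. F (x + 1) = F x + 1"
    and "\<forall>x. f (cis (2 * pi * x)) = cis (2 * pi * F x)"
    unfolding homeo_plus_S1_def by blast
  with that show ?thesis
    unfolding degree_one_lift_def using strict_mono_mono by blast
qed

lemma funpow_lift:
  assumes "\<And>x. f (cis (2 * pi * x)) = cis (2 * pi * F x)"
  shows "(f ^^ n) (cis (2 * pi * x)) = cis (2 * pi * (F ^^ n) x)"
  by (induction n) (simp_all add: assms)

lemma continuous_Ints_valued_constant:
  fixes \<psi> :: "'a::topological_space \<Rightarrow> real"
  assumes "connected S" and "continuous_on S \<psi>" and "\<psi> ` S \<subseteq> \<int>"
  shows "\<psi> constant_on S"
proof (rule continuous_discrete_range_constant[OF assms(1,2)])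
  fix x assume "x \<in> S"
  show "\<exists>e>0. \<forall>y. y \<in> S \<and> \<psi> y \<noteq> \<psi> x \<longrightarrow> e \<le> norm (\<psi> y - \<psi> x)"
  proof (intro exI[of _ 1] conjI allI impI)
    fix y assume "y \<in> S \<and> \<psi> y \<noteq> \<psi> x"
    with \<open>x \<in> S\<close> assms(3) have "\<psi> y - \<psi> x \<in> \<int>" and "\<psi> y - \<psi> x \<noteq> 0"
      by (auto intro: Ints_diff)
    then show "1 \<le> norm (\<psi> y - \<psi> x)"
      unfolding real_norm_def by (rule Ints_nonzero_abs_ge1)
  qed simp
qed

lemma lift_twisted_conjugacy:
  assumes g: "homeo_plus_S1 g"
    and G: "degree_one_lift G" "\<And>x. g (cis (2 * pi * x)) = cis (2 * pi * G x)"
    and F: "degree_one_lift F" "\<And>x. h (cis (2 * pi * x)) = cis (2 * pi * F x)"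
    and rel: "\<forall>z\<in>circle. g ((h ^^ m) (inv_into circle g z)) = (h ^^ n) z"
  obtains k :: int where "\<And>x. G ((F ^^ m) x) = (F ^^ n) (G x) + of_int k"
proof -
  have cis_circle: "cis t \<in> circle" for t
    unfolding circle_def by simp
  have "inj_on g circle"
    using g unfolding homeo_plus_S1_def by (metis homeomorphism_apply1 inj_on_inverseI)
  have inv: "inv_into circle g (cis (2 * pi * G x)) = cis (2 * pi * x)" for x
    using inv_into_f_f[OF \<open>inj_on g circle\<close> cis_circle[of "2 * pi * x"]] G(2) by simp
  define \<psi> where "\<psi> = (\<lambda>x. G ((F ^^ m) x) - (F ^^ n) (G x))"
  have Ints: "\<psi> x \<in> \<int>" for x
  proof -
    have "g ((h ^^ m) (inv_into circle g (cis (2 * pi * G x)))) = (h ^^ n) (cis (2 * pi * G x))"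
      using rel cis_circle by blast
    then show ?thesis
      unfolding \<psi>_def inv using G(2) funpow_lift[where f = h, OF F(2)] cis_2pi_eq_iff by simp
  qed
  have Gc: "continuous_on UNIV G"
    using G(1) by (simp add: degree_one_lift_def)
  have Fc: "continuous_on UNIV (F ^^ j)" for j
    using degree_one_lift_funpow[OF F(1)] by (simp add: degree_one_lift_def)
  have "continuous_on UNIV \<psi>"
    unfolding \<psi>_def
    by (intro continuous_on_diff continuous_on_compose2[OF Gc Fc] continuous_on_compose2[OF Fc Gc])
      simp_all
  then have "\<psi> constant_on UNIV"
    using Ints by (intro continuous_Ints_valued_constant) auto
  then have const: "\<psi> x = \<psi> 0" for x
    by (auto simp: constant_on_def)
  obtain k where k: "\<psi> 0 = of_int k"
    using Ints[of 0] by (auto elim: Ints_cases)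
  show ?thesis
  proof (rule that)
    show "G ((F ^^ m) x) = (F ^^ n) (G x) + of_int k" for x
      using const[of x] k unfolding \<psi>_def by simp
  qed
qed

lemma periodic_point_of_period_dvd:
  assumes "(f ^^ d) z = z" and "0 < d"
  obtains p where "periodic_point_of_period f z p" and "p dvd d"
proof -
  define p where "p = (LEAST j. 0 < j \<and> (f ^^ j) z = z)"
  have p: "0 < p" "(f ^^ p) z = z"
    using LeastI[of "\<lambda>j. 0 < j \<and> (f ^^ j) z = z" d] assms unfolding p_def by auto
  have minimal: "(f ^^ j) z \<noteq> z" if "0 < j" "j < p" for j
    using not_less_Least[of j "\<lambda>j. 0 < j \<and> (f ^^ j) z = z"] that unfolding p_def by blast
  have "(f ^^ (d mod p)) z = z"
    using funpow_mod_eq[where f = f and n = p and x = z and m = d] p assms(1) by simp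
  then have "d mod p = 0"
    using minimal[of "d mod p"] \<open>0 < p\<close> by (meson mod_less_divisor neq0_conv)
  then have "p dvd d"
    by (rule mod_0_imp_dvd)
  moreover have "periodic_point_of_period f z p"
    unfolding periodic_point_of_period_def using p minimal by blast
  ultimately show ?thesis
    using that by blast
qed

theorem lemma5p5:
  fixes m n :: nat and g h :: "complex \<Rightarrow> complex"
  assumes "m > 0" and "n > 0" and "m \<noteq> n"
    and "homeo_plus_S1 g" and "homeo_plus_S1 h"
    and "\<forall>z\<in>circle. g ((h ^^ m) (inv_into circle g z)) = (h ^^ n) z"
  shows "\<exists>x\<in>circle. \<exists>p. periodic_point_of_period h x p \<and>
           p dvd nat \<bar>int n - int m\<bar>"
proof -
  define d where "d = nat \<bar>int n - int m\<bar>"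
  obtain F where F: "degree_one_lift F" "\<And>x. h (cis (2 * pi * x)) = cis (2 * pi * F x)"
    using homeo_plus_S1_degree_one_lift[OF assms(5)] by blast
  obtain G where G: "degree_one_lift G" "\<And>x. g (cis (2 * pi * x)) = cis (2 * pi * G x)"
    using homeo_plus_S1_degree_one_lift[OF assms(4)] by blast
  obtain k where "\<And>x. G ((F ^^ m) x) = (F ^^ n) (G x) + of_int k"
    using lift_twisted_conjugacy[OF assms(4) G F assms(6)] by blast
  then obtain x \<kappa> where "\<kappa> \<in> \<int>" and "(F ^^ d) x = x + \<kappa>"
    using twisted_semiconjugacy_integer_displacement[OF F(1) G(1) assms(3)] unfolding d_def by blast
  then have "(h ^^ d) (cis (2 * pi * x)) = cis (2 * pi * x)"
    using funpow_lift[where f = h, OF F(2)] cis_2pi_eq_iff by simp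
  moreover have "0 < d"
    using assms(3) unfolding d_def by simp
  ultimately obtain p where "periodic_point_of_period h (cis (2 * pi * x)) p" and "p dvd d"
    by (rule periodic_point_of_period_dvd)
  moreover have "cis (2 * pi * x) \<in> circle"
    unfolding circle_def by simp
  ultimately show ?thesis
    unfolding d_def by blast
qed

end
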